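(* Suppose $J^d_\mu$ takes the same value for all $d\in\mathcal D$. Then a policy $d\in\mathcal D$, with quantities $(\mathbf P,\mathbf r,J_\mu,\mathbf g)$, satisfies $J^d_{\mu,\sigma}=\max_{d''\in\mathcal D}J^{d''}_{\mu,\sigma}$ if and only if for every $d'\in\mathcal D$ with $(\mathbf P',\mathbf r')$, $$\sum_{j\in\mathcal S}p'(i,j)g(j)+r'(i)-\beta(r'(i)-J_\mu)^2\ \le\ \sum_{j\in\mathcal S}p(i,j)g(j)+r(i)-\beta(r(i)-J_\mu)^2\qquad\text{for all } i\in\mathcal S.$$
   Context: Let $\mathcal S=\{1,\dots,S\}$ be a finite state space and $\mathcal A$ a finite action set. For $i,j\in\mathcal S$, $a\in\mathcal A$, let $p^a(i,j)\ge 0$ with $\sum_{j}p^a(i,j)=1$ be transition probabilities and $r(i,a)\in\mathbb R$ rewards. A deterministic stationary policy is a map $d:\mathcal S\to\mathcal A$; $\mathcal D$ denotes the set of such policies. Under $d$, $\mathbf P^d$ is the matrix with entries $p(i,j)=p^{d(i)}(i,j)$ and $\mathbf r^d$ the vector with entries $r(i)=r(i,d(i))$. Standing assumption: for every $d\in\mathcal D$ the chain with transition matrix $\mathbf P^d$ is irreducible, so it has a unique stationary distribution $\boldsymbol\pi^d$ (row vector, $\boldsymbol\pi^d\mathbf P^d=\boldsymbol\pi^d$, $\boldsymbol\pi^d\mathbf 1=1$) with all entries strictly positive. Define $J^d_\mu=\boldsymbol\pi^d\mathbf r^d$, $J^d_\sigma=\sum_i\pi^d(i)(r(i,d(i))-J^d_\mu)^2$,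 and for fixed $\beta>0$, $J^d_{\mu,\sigma}=J^d_\mu-\beta J^d_\sigma=\boldsymbol\pi^d\mathbf f^d$ with $f^d(i)=r(i,d(i))-\beta(r(i,d(i))-J^d_\mu)^2$. The performance potential $\mathbf g^d$ is any solution of $\mathbf g^d=\mathbf f^d-J^d_{\mu,\sigma}\mathbf 1+\mathbf P^d\mathbf g^d$ (unique up to an additive constant vector). *)

theory Defs
  imports Main "HOL.Real"
begin

text \<open>MDP with finite state type 's and finite action type 'a.
  p a i j = transition probability from i to j under action a; r i a = reward.
  Deterministic stationary policies are the functions d :: 's \<Rightarrow> 'a.\<close>

definition stochastic :: "('a \<Rightarrow> 's::finite \<Rightarrow> 's \<Rightarrow> real) \<Rightarrow> bool" where
  "stochastic p \<longleftrightarrow> (\<forall>a i j. p a i j \<ge> 0) \<and> (\<forall>a i. (\<Sum>j\<in>UNIV. p a i j) = 1)"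

definition irreducible_policy :: "('a \<Rightarrow> 's \<Rightarrow> 's \<Rightarrow> real) \<Rightarrow> ('s \<Rightarrow> 'a) \<Rightarrow> bool" where
  "irreducible_policy p d \<longleftrightarrow> (\<forall>i j. (i, j) \<in> {(x, y). p (d x) x y > 0}\<^sup>*)"

definition is_stat_dist :: "('a \<Rightarrow> 's::finite \<Rightarrow> 's \<Rightarrow> real) \<Rightarrow> ('s \<Rightarrow> 'a) \<Rightarrow> ('s \<Rightarrow> real) \<Rightarrow> bool" where
  "is_stat_dist p d \<pi> \<longleftrightarrow> (\<forall>j. (\<Sum>i\<in>UNIV. \<pi> i * p (d i) i j) = \<pi> j) \<and> (\<Sum>i\<in>UNIV. \<pi> i) = 1"

text \<open>The (unique, under irreducibility) stationary distribution \<pi>^d.\<close>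
definition stat_dist :: "('a \<Rightarrow> 's::finite \<Rightarrow> 's \<Rightarrow> real) \<Rightarrow> ('s \<Rightarrow> 'a) \<Rightarrow> 's \<Rightarrow> real" where
  "stat_dist p d = (THE \<pi>. is_stat_dist p d \<pi>)"

definition J_mu :: "('a \<Rightarrow> 's::finite \<Rightarrow> 's \<Rightarrow> real) \<Rightarrow> ('s \<Rightarrow> 'a \<Rightarrow> real) \<Rightarrow> ('s \<Rightarrow> 'a) \<Rightarrow> real" where
  "J_mu p r d = (\<Sum>i\<in>UNIV. stat_dist p d i * r i (d i))"

definition f_ms :: "('a \<Rightarrow> 's::finite \<Rightarrow> 's \<Rightarrow> real) \<Rightarrow> ('s \<Rightarrow> 'a \<Rightarrow> real) \<Rightarrow> real \<Rightarrow> ('s \<Rightarrow> 'a) \<Rightarrow> 's \<Rightarrow> real" where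
  "f_ms p r \<beta> d i = r i (d i) - \<beta> * (r i (d i) - J_mu p r d)\<^sup>2"

definition J_ms :: "('a \<Rightarrow> 's::finite \<Rightarrow> 's \<Rightarrow> real) \<Rightarrow> ('s \<Rightarrow> 'a \<Rightarrow> real) \<Rightarrow> real \<Rightarrow> ('s \<Rightarrow> 'a) \<Rightarrow> real" where
  "J_ms p r \<beta> d = (\<Sum>i\<in>UNIV. stat_dist p d i * f_ms p r \<beta> d i)"

definition is_potential :: "('a \<Rightarrow> 's::finite \<Rightarrow> 's \<Rightarrow> real) \<Rightarrow> ('s \<Rightarrow> 'a \<Rightarrow> real) \<Rightarrow> real \<Rightarrow> ('s \<Rightarrow> 'a) \<Rightarrow> ('s \<Rightarrow> real) \<Rightarrow> bool" where
  "is_potential p r \<beta> d g \<longleftrightarrow>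
     (\<forall>i. g i = f_ms p r \<beta> d i - J_ms p r \<beta> d + (\<Sum>j\<in>UNIV. p (d i) i j * g j))"

end

theory Submission imports Defs "HOL-Analysis.Analysis" begin

text \<open>The stationary distribution of every policy is strictly positive (Brouwer gives
  existence, irreducibility gives positivity and uniqueness). Averaging the potential
  equation of \<open>d\<close> against \<open>\<pi>\<^sup>e\<close> yields the performance difference formula
  \<open>J\<^sup>e - J\<^sup>d = \<Sum>\<^sub>i \<pi>\<^sup>e(i) (A(i, e i) - A(i, d i))\<close>, where \<open>A\<close> is the left- or right-hand
  side of the optimality inequality; this uses that \<open>J\<^sub>\<mu>\<close> does not depend on the policy.
  Since the weights are positive and \<open>A(i, e i)\<close> depends only on the action at \<open>i\<close>,
  \<open>d\<close> is optimal iff no single state can be improved.\<close>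

lemma stochastic_matrix_has_stationary:
  fixes P :: "'s::finite \<Rightarrow> 's \<Rightarrow> real"
  assumes nonneg: "\<And>i j. P i j \<ge> 0" and rows: "\<And>i. (\<Sum>j\<in>UNIV. P i j) = 1"
  obtains \<pi> where "\<And>i. \<pi> i \<ge> 0" "\<And>j. (\<Sum>i\<in>UNIV. \<pi> i * P i j) = \<pi> j"
    "(\<Sum>i\<in>UNIV. \<pi> i) = 1"
proof -
  define S where "S = {x::real^'s. (\<forall>i. 0 \<le> x$i) \<and> (\<Sum>i\<in>UNIV. x$i) = 1}"
  define f where "f = (\<lambda>x::real^'s. \<chi> j. \<Sum>i\<in>UNIV. x$i * P i j)"
  have "closed S"
  proof -
    have "S = {x::real^'s. \<forall>i. 0 \<le> x$i} \<inter> {x. (\<Sum>i\<in>UNIV. x$i) = 1}"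
      unfolding S_def by auto
    moreover have "closed {x::real^'s. (\<Sum>i\<in>UNIV. x$i) = 1}"
      by (intro closed_Collect_eq continuous_intros)
    ultimately show ?thesis using closed_positive_orthant closed_Int by metis
  qed
  moreover have "S \<subseteq> cbox 0 1"
  proof
    fix x assume x: "x \<in> S"
    have "x$i \<le> (\<Sum>k\<in>UNIV. x$k)" for i
      using x unfolding S_def by (intro member_le_sum) auto
    then show "x \<in> cbox 0 1" using x unfolding S_def by (auto simp: mem_box_cart)
  qed
  ultimately have "compact S"
    by (meson bounded_cbox bounded_subset compact_eq_bounded_closed)
  moreover have "convex S"
  proof (rule convexI)
    fix x y :: "real^'s" and u v :: real
    assume "x \<in> S" "y \<in> S" "0 \<le> u" "0 \<le> v" "u + v = 1"
    moreover have "(\<Sum>i\<in>UNIV. (u *\<^sub>R x + v *\<^sub>R y)$i) = u * (\<Sum>i\<in>UNIV. x$i) + v * (\<Sum>i\<in>UNIV. y$i)"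
      by (simp add: sum.distrib sum_distrib_left)
    ultimately show "u *\<^sub>R x + v *\<^sub>R y \<in> S" unfolding S_def by simp
  qed
  moreover have "(\<chi> i. 1 / real CARD('s)) \<in> S" unfolding S_def by auto
  moreover have "continuous_on S f" unfolding f_def by (intro continuous_intros)
  moreover have "f \<in> S \<rightarrow> S"
  proof
    fix x assume x: "x \<in> S"
    have "(\<Sum>j\<in>UNIV. \<Sum>i\<in>UNIV. x$i * P i j) = (\<Sum>i\<in>UNIV. x$i * (\<Sum>j\<in>UNIV. P i j))"
      by (subst sum.swap) (simp add: sum_distrib_left)
    then show "f x \<in> S" using x nonneg rows unfolding S_def f_def
      by (auto intro!: sum_nonneg)
  qed
  ultimately obtain x where "x \<in> S" "f x = x" using brouwer by blast
  then show ?thesis using that[of "\<lambda>i. x$i"] unfolding S_def f_def by (auto simp: vec_eq_iff)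
qed

text \<open>Mass flowing into a state with no mass must come from states with no mass.\<close>

lemma irreducible_invariant_vanishes:
  fixes w :: "'s::finite \<Rightarrow> real"
  assumes nonneg: "\<And>i j. P i j \<ge> 0"
    and irred: "\<And>i j. (i, j) \<in> {(x, y). P x y > 0}\<^sup>*"
    and invariant: "\<And>j. (\<Sum>i\<in>UNIV. w i * P i j) = w j"
    and w_nonneg: "\<And>i. w i \<ge> 0" and w_zero: "w k = 0"
  shows "w i = 0"
  using irred[of i k]
proof (induction rule: converse_rtrancl_induct)
  case base
  then show ?case using w_zero .
next
  case (step a y)
  then have "(\<Sum>x\<in>UNIV. w x * P x y) = 0" using invariant[of y] by simp
  then have "w a * P a y = 0"
    by (simp add: sum_nonneg_eq_0_iff w_nonneg nonneg)
  with step(1) show ?case by auto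
qed

lemma irreducible_stationary_pos:
  fixes \<pi> :: "'s::finite \<Rightarrow> real"
  assumes nonneg: "\<And>i j. P i j \<ge> 0"
    and irred: "\<And>i j. (i, j) \<in> {(x, y). P x y > 0}\<^sup>*"
    and invariant: "\<And>j. (\<Sum>i\<in>UNIV. \<pi> i * P i j) = \<pi> j"
    and \<pi>_nonneg: "\<And>i. \<pi> i \<ge> 0" and \<pi>_sum: "(\<Sum>i\<in>UNIV. \<pi> i) = 1"
  shows "\<pi> i > 0"
proof (rule ccontr)
  assume "\<not> \<pi> i > 0"
  then have "\<pi> i = 0" using \<pi>_nonneg[of i] by linarith
  then have "\<pi> k = 0" for k
    using irreducible_invariant_vanishes[OF nonneg irred invariant \<pi>_nonneg] by blast
  then show False using \<pi>_sum by simp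
qed

text \<open>With \<open>c = min\<^sub>i v(i)/\<pi>(i)\<close>, the invariant vector \<open>v - c \<pi>\<close> is nonnegative and vanishes
  somewhere, hence everywhere.\<close>

lemma irreducible_stationary_unique:
  fixes \<pi> v :: "'s::finite \<Rightarrow> real"
  assumes nonneg: "\<And>i j. P i j \<ge> 0"
    and irred: "\<And>i j. (i, j) \<in> {(x, y). P x y > 0}\<^sup>*"
    and \<pi>_invariant: "\<And>j. (\<Sum>i\<in>UNIV. \<pi> i * P i j) = \<pi> j"
    and \<pi>_pos: "\<And>i. \<pi> i > 0" and \<pi>_sum: "(\<Sum>i\<in>UNIV. \<pi> i) = 1"
    and v_invariant: "\<And>j. (\<Sum>i\<in>UNIV. v i * P i j) = v j" and v_sum: "(\<Sum>i\<in>UNIV. v i) = 1"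
  shows "v = \<pi>"
proof -
  define c where "c = Min ((\<lambda>i. v i / \<pi> i) ` UNIV)"
  have "c \<in> (\<lambda>i. v i / \<pi> i) ` UNIV" unfolding c_def by (rule Min_in) auto
  then obtain k where k: "c = v k / \<pi> k" by blast
  define w where "w = (\<lambda>i. v i - c * \<pi> i)"
  have "w i \<ge> 0" for i
  proof -
    have "c \<le> v i / \<pi> i" unfolding c_def by (rule Min_le) auto
    then show ?thesis using \<pi>_pos[of i] unfolding w_def by (simp add: field_simps)
  qed
  moreover have "w k = 0" using k \<pi>_pos[of k] unfolding w_def by simp
  moreover have "(\<Sum>i\<in>UNIV. w i * P i j) = w j" for j
  proof -
    have "(\<Sum>i\<in>UNIV. w i * P i j) = (\<Sum>i\<in>UNIV. v i * P i j) - c * (\<Sum>i\<in>UNIV. \<pi> i * P i j)"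
      unfolding w_def by (simp add: left_diff_distrib sum_subtractf sum_distrib_left mult.assoc)
    then show ?thesis using v_invariant[of j] \<pi>_invariant[of j] unfolding w_def by simp
  qed
  ultimately have "w i = 0" for i
    using irreducible_invariant_vanishes[OF nonneg irred] by blast
  then have v: "v = (\<lambda>i. c * \<pi> i)" unfolding w_def by auto
  then have "c = 1" using v_sum \<pi>_sum by (simp add: sum_distrib_left[symmetric])
  with v show ?thesis by simp
qed

lemma stat_dist:
  assumes "stochastic p" and "irreducible_policy p e"
  shows "is_stat_dist p e (stat_dist p e)" and "stat_dist p e i > 0"
proof -
  define P where "P = (\<lambda>i j. p (e i) i j)"
  have nonneg: "\<And>i j. P i j \<ge> 0" and rows: "\<And>i. (\<Sum>j\<in>UNIV. P i j) = 1"
    using assms(1) unfolding stochastic_def P_def by auto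
  have irred: "\<And>i j. (i, j) \<in> {(x, y). P x y > 0}\<^sup>*"
    using assms(2) unfolding irreducible_policy_def P_def by simp
  obtain \<pi> where \<pi>_nonneg: "\<And>i. \<pi> i \<ge> 0"
    and \<pi>_invariant: "\<And>j. (\<Sum>i\<in>UNIV. \<pi> i * P i j) = \<pi> j" and \<pi>_sum: "(\<Sum>i\<in>UNIV. \<pi> i) = 1"
    using stochastic_matrix_has_stationary[of P, OF nonneg rows] by metis
  have \<pi>_pos: "\<And>i. \<pi> i > 0"
    using irreducible_stationary_pos[OF nonneg irred \<pi>_invariant \<pi>_nonneg \<pi>_sum] .
  have "is_stat_dist p e \<pi>"
    using \<pi>_invariant \<pi>_sum unfolding is_stat_dist_def P_def by auto
  moreover have "v = \<pi>" if "is_stat_dist p e v" for v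
  proof (rule irreducible_stationary_unique[OF nonneg irred \<pi>_invariant \<pi>_pos \<pi>_sum])
    show "\<And>j. (\<Sum>i\<in>UNIV. v i * P i j) = v j" "(\<Sum>i\<in>UNIV. v i) = 1"
      using that unfolding is_stat_dist_def P_def by simp_all
  qed
  ultimately have "stat_dist p e = \<pi>"
    unfolding stat_dist_def by (rule the_equality)
  with \<open>is_stat_dist p e \<pi>\<close> \<pi>_pos show "is_stat_dist p e (stat_dist p e)" "stat_dist p e i > 0"
    by simp_all
qed

lemma stationary_expectation_step:
  fixes P :: "'s::finite \<Rightarrow> 's \<Rightarrow> 'b::comm_semiring_1"
  assumes "\<And>j. (\<Sum>i\<in>UNIV. \<pi> i * P i j) = \<pi> j"
  shows "(\<Sum>i\<in>UNIV. \<pi> i * (\<Sum>j\<in>UNIV. P i j * g j)) = (\<Sum>j\<in>UNIV. \<pi> j * g j)"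
proof -
  have "(\<Sum>i\<in>UNIV. \<pi> i * (\<Sum>j\<in>UNIV. P i j * g j)) = (\<Sum>i\<in>UNIV. \<Sum>j\<in>UNIV. \<pi> i * P i j * g j)"
    by (simp add: sum_distrib_left mult.assoc)
  also have "\<dots> = (\<Sum>j\<in>UNIV. (\<Sum>i\<in>UNIV. \<pi> i * P i j) * g j)"
    by (subst sum.swap) (simp add: sum_distrib_right)
  also have "\<dots> = (\<Sum>j\<in>UNIV. \<pi> j * g j)" using assms by simp
  finally show ?thesis .
qed

lemma performance_difference:
  assumes "stochastic p" and "irreducible_policy p e" and pot: "is_potential p r \<beta> d g"
  shows "J_ms p r \<beta> e - J_ms p r \<beta> d =
    (\<Sum>i\<in>UNIV. stat_dist p e i *
       (((\<Sum>j\<in>UNIV. p (e i) i j * g j) + f_ms p r \<beta> e i)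
        - ((\<Sum>j\<in>UNIV. p (d i) i j * g j) + f_ms p r \<beta> d i)))"
proof -
  define q where "q = stat_dist p e"
  have "is_stat_dist p e q" unfolding q_def using stat_dist(1)[OF assms(1,2)] .
  then have q_step: "(\<Sum>i\<in>UNIV. q i * (\<Sum>j\<in>UNIV. p (e i) i j * g j)) = (\<Sum>j\<in>UNIV. q j * g j)"
    and q_sum: "(\<Sum>i\<in>UNIV. q i) = 1"
    using stationary_expectation_step[of q "\<lambda>i. p (e i) i"] unfolding is_stat_dist_def by auto
  have "(\<Sum>j\<in>UNIV. p (d i) i j * g j) + f_ms p r \<beta> d i = g i + J_ms p r \<beta> d" for i
    using pot[unfolded is_potential_def, rule_format, of i] by linarith
  then have "(\<Sum>i\<in>UNIV. q i *
       (((\<Sum>j\<in>UNIV. p (e i) i j * g j) + f_ms p r \<beta> e i)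
        - ((\<Sum>j\<in>UNIV. p (d i) i j * g j) + f_ms p r \<beta> d i)))
      = (\<Sum>i\<in>UNIV. q i * (\<Sum>j\<in>UNIV. p (e i) i j * g j)) + (\<Sum>i\<in>UNIV. q i * f_ms p r \<beta> e i)
        - (\<Sum>i\<in>UNIV. q i * g i) - (\<Sum>i\<in>UNIV. q i) * J_ms p r \<beta> d"
    by (simp add: right_diff_distrib distrib_left sum.distrib sum_subtractf sum_distrib_right)
  also have "\<dots> = J_ms p r \<beta> e - J_ms p r \<beta> d"
    using q_step q_sum unfolding J_ms_def q_def by simp
  finally show ?thesis unfolding q_def by simp
qed

text \<open>A single improving action, switched in at one state only, already yields a better policy.\<close>

lemma Max_iff_no_local_improvement:
  fixes J :: "('s::finite \<Rightarrow> 'a::finite) \<Rightarrow> real" and A :: "'s \<Rightarrow> 'a \<Rightarrow> real"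
  assumes pos: "\<And>e i. w e i > 0"
    and diff: "\<And>e. J e - J d = (\<Sum>i\<in>UNIV. w e i * (A i (e i) - A i (d i)))"
  shows "J d = Max (range J) \<longleftrightarrow> (\<forall>e i. A i (e i) \<le> A i (d i))"
proof
  assume max: "J d = Max (range J)"
  show "\<forall>e i. A i (e i) \<le> A i (d i)"
  proof (rule ccontr)
    assume "\<not> (\<forall>e i. A i (e i) \<le> A i (d i))"
    then obtain e k where k: "A k (e k) > A k (d k)" by (meson not_le)
    define e' where "e' = d(k := e k)"
    have "J e' - J d = w e' k * (A k (e k) - A k (d k))"
      unfolding diff by (subst sum.mono_neutral_right[of UNIV "{k}"]) (auto simp: e'_def)
    also have "\<dots> > 0" using pos k by simp
    finally have "J e' > J d" by simp
    moreover have "J e' \<le> Max (range J)" by (rule Max_ge) auto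
    ultimately show False using max by linarith
  qed
next
  assume "\<forall>e i. A i (e i) \<le> A i (d i)"
  then have "(\<Sum>i\<in>UNIV. w e i * (A i (e i) - A i (d i))) \<le> 0" for e
    using pos[of e] by (intro sum_nonpos mult_nonneg_nonpos) (auto simp: less_imp_le)
  then have "J e \<le> J d" for e
    using diff[of e] by (metis diff_le_0_iff_le)
  then show "J d = Max (range J)" by (intro Max_eqI[symmetric]) auto
qed

theorem mainTheorem4:
  fixes p :: "'a::finite \<Rightarrow> 's::finite \<Rightarrow> 's \<Rightarrow> real"
    and r :: "'s \<Rightarrow> 'a \<Rightarrow> real"
    and \<beta> :: real
    and d :: "'s \<Rightarrow> 'a"
    and g :: "'s \<Rightarrow> real"
  assumes stoch: "stochastic p"
    and irred: "\<And>d'. irreducible_policy p d'"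
    and beta_pos: "\<beta> > 0"
    and same_mu: "\<And>d1 d2. J_mu p r d1 = J_mu p r d2"
    and pot: "is_potential p r \<beta> d g"
  shows "J_ms p r \<beta> d = Max (range (J_ms p r \<beta>)) \<longleftrightarrow>
    (\<forall>d'. \<forall>i.
       (\<Sum>j\<in>UNIV. p (d' i) i j * g j) + r i (d' i) - \<beta> * (r i (d' i) - J_mu p r d)\<^sup>2
       \<le> (\<Sum>j\<in>UNIV. p (d i) i j * g j) + r i (d i) - \<beta> * (r i (d i) - J_mu p r d)\<^sup>2)"
proof -
  define A where "A = (\<lambda>i a. (\<Sum>j\<in>UNIV. p a i j * g j) + r i a - \<beta> * (r i a - J_mu p r d)\<^sup>2)"
  have A: "(\<Sum>j\<in>UNIV. p (e i) i j * g j) + f_ms p r \<beta> e i = A i (e i)" for e i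
    unfolding A_def f_ms_def using same_mu[of e d] by simp
  have "J_ms p r \<beta> e - J_ms p r \<beta> d = (\<Sum>i\<in>UNIV. stat_dist p e i * (A i (e i) - A i (d i)))" for e
    using performance_difference[OF stoch irred pot, of e] by (simp only: A)
  then have "J_ms p r \<beta> d = Max (range (J_ms p r \<beta>)) \<longleftrightarrow> (\<forall>e i. A i (e i) \<le> A i (d i))"
    using Max_iff_no_local_improvement stat_dist(2)[OF stoch irred] by blast
  then show ?thesis unfolding A_def by (simp add: add_diff_eq)
qed

end
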